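(* Let $r\in(0,1)$ and let $p=T^3+rT^2+T+r$ over $\mathbb T$. Then a polynomial $q$ over $\mathbb T$ satisfies $p\in(T+r)\boxdot q$ if and only if $q=T^2+sT+1$ for some $s\in[0,r]$. In particular $r^{-2}T^2+r^{-1}T+1$ is not such a quotient.
   Context: The tropical hyperfield $\mathbb T$ is $\mathbb R_{\ge0}$ with usual multiplication and hyperaddition $a\boxplus b=\{\max\{a,b\}\}$ if $a\ne b$, $a\boxplus a=[0,a]$ (so $c\in a\boxplus b$ iff the maximum of $a,b,c$ is attained at least twice). Polynomials over $\mathbb T$ are finitely supported sequences $\sum c_iT^i$; the hyperproduct is $p\boxdot q=\{\sum e_iT^i : e_i\in \boxplus_{k+l=i} c_kd_l\}$, with iterated sums $\boxplus_{i=1}^n a_i=\bigcup_{b\in\boxplus_{i=1}^{n-1}a_i} b\boxplus a_n$. *)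

theory Defs
  imports Main "HOL.Real"
begin

text \<open>Tropical hyperfield: elements are nonnegative reals.
  Hyperaddition: a \<boxplus> b = {max a b} if a \<noteq> b, and [0,a] if a = b.\<close>

definition thadd :: "real \<Rightarrow> real \<Rightarrow> real set" where
  "thadd a b = (if a \<noteq> b then {max a b} else {x. 0 \<le> x \<and> x \<le> a})"

fun thsum_aux :: "real set \<Rightarrow> real list \<Rightarrow> real set" where
  "thsum_aux S [] = S"
| "thsum_aux S (a # as) = thsum_aux (\<Union>b\<in>S. thadd b a) as"

fun thsum :: "real list \<Rightarrow> real set" where
  "thsum [] = {0}"
| "thsum (a # as) = thsum_aux {a} as"

definition tpoly :: "(nat \<Rightarrow> real) set" where
  "tpoly = {c. (\<forall>i. 0 \<le> c i) \<and> finite {i. c i \<noteq> 0}}"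

definition tpoly_of_list :: "real list \<Rightarrow> nat \<Rightarrow> real" where
  "tpoly_of_list xs = (\<lambda>i. if i < length xs then xs ! i else 0)"

definition thprod :: "(nat \<Rightarrow> real) \<Rightarrow> (nat \<Rightarrow> real) \<Rightarrow> (nat \<Rightarrow> real) set" where
  "thprod c d = {e. \<forall>i. e i \<in> thsum (map (\<lambda>k. c k * d (i - k)) [0..<Suc i])}"

end

theory Submission
  imports Defs
begin

text \<open>Multiplying by the linear factor \<open>T + a\<close>, every coefficient of the product is a hypersum of
  at most two nonzero terms, so \<open>p \<in> (T + r) \<boxdot> q\<close> becomes the coefficientwise conditions
  \<open>p\<^sub>0 = r q\<^sub>0\<close> and \<open>p\<^sub>j\<^sub>+\<^sub>1 \<in> r q\<^sub>j\<^sub>+\<^sub>1 \<boxplus> q\<^sub>j\<close>. Above the degree of \<open>p\<close> these force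
  \<open>q\<^sub>j = r q\<^sub>j\<^sub>+\<^sub>1\<close>, which for a finitely supported \<open>q\<close> means \<open>q\<close> has degree at most 2;
  the remaining conditions read \<open>q\<^sub>0 = q\<^sub>2 = 1\<close> and \<open>q\<^sub>1 \<le> r\<close>, with \<open>r q\<^sub>1 < 1\<close> needed for
  the converse.\<close>

lemma thadd_iff:
  "x \<in> thadd a b \<longleftrightarrow> (a \<noteq> b \<and> x = max a b) \<or> (a = b \<and> 0 \<le> x \<and> x \<le> a)"
  by (auto simp: thadd_def)

lemma thadd_nonneg: "0 \<le> a \<Longrightarrow> 0 \<le> b \<Longrightarrow> x \<in> thadd a b \<Longrightarrow> 0 \<le> x"
  by (auto simp: thadd_iff)

lemma zero_in_thadd_iff: "0 \<le> a \<Longrightarrow> 0 \<le> b \<Longrightarrow> 0 \<in> thadd a b \<longleftrightarrow> a = b"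
  by (auto simp: thadd_iff max_def)

lemma thadd_zero_right: "0 \<le> a \<Longrightarrow> thadd a 0 = {a}"
  by (auto simp: thadd_def)

lemma thsum_aux_zeros:
  assumes "\<forall>x\<in>S. 0 \<le> x" and "\<forall>a\<in>set as. a = 0"
  shows "thsum_aux S as = S"
  using assms
proof (induction as arbitrary: S)
  case (Cons a as)
  have "(\<Union>b\<in>S. thadd b 0) = S"
    using Cons.prems(1) by (auto simp: thadd_zero_right)
  with Cons show ?case by simp
qed simp

lemma thsum_linear_coeff:
  fixes a :: real and d :: "nat \<Rightarrow> real"
  assumes "0 \<le> a" and "\<forall>i. 0 \<le> d i"
  shows "thsum (map (\<lambda>k. tpoly_of_list [a, 1] k * d (Suc j - k)) [0..<Suc (Suc j)])
         = thadd (a * d (Suc j)) (d j)"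
proof -
  let ?f = "\<lambda>k. tpoly_of_list [a, 1] k * d (Suc j - k)"
  have "[0..<Suc (Suc j)] = 0 # 1 # [2..<Suc (Suc j)]"
    by (simp add: upt_conv_Cons numeral_2_eq_2 del: upt_Suc)
  then have map_f: "map ?f [0..<Suc (Suc j)] = ?f 0 # ?f 1 # map ?f [2..<Suc (Suc j)]"
    by (simp only: list.map)
  have f0: "?f 0 = a * d (Suc j)" and f1: "?f 1 = d j"
    by (simp_all add: tpoly_of_list_def)
  have "thsum (map ?f [0..<Suc (Suc j)])
      = thsum_aux (thadd (a * d (Suc j)) (d j)) (map ?f [2..<Suc (Suc j)])"
    by (simp only: map_f f0 f1 thsum.simps thsum_aux.simps) (simp del: upt_Suc)
  also have "\<dots> = thadd (a * d (Suc j)) (d j)"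
  proof (rule thsum_aux_zeros)
    show "\<forall>x\<in>thadd (a * d (Suc j)) (d j). 0 \<le> x"
      using assms by (blast intro: thadd_nonneg mult_nonneg_nonneg)
    show "\<forall>x\<in>set (map ?f [2..<Suc (Suc j)]). x = 0"
      by (auto simp: tpoly_of_list_def)
  qed
  finally show ?thesis .
qed

lemma thprod_linear_iff:
  fixes a :: real and d :: "nat \<Rightarrow> real"
  assumes "0 \<le> a" and "\<forall>i. 0 \<le> d i"
  shows "e \<in> thprod (tpoly_of_list [a, 1]) d \<longleftrightarrow>
         e 0 = a * d 0 \<and> (\<forall>j. e (Suc j) \<in> thadd (a * d (Suc j)) (d j))"
proof -
  let ?coeff = "\<lambda>i. thsum (map (\<lambda>k. tpoly_of_list [a, 1] k * d (i - k)) [0..<Suc i])"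
  have coeff0: "?coeff 0 = {a * d 0}"
    by (simp add: tpoly_of_list_def)
  have coeffS: "?coeff (Suc j) = thadd (a * d (Suc j)) (d j)" for j
    using thsum_linear_coeff[OF assms] by (simp del: upt_Suc)
  show ?thesis
    unfolding thprod_def
  proof safe
    assume all: "\<forall>i. e i \<in> ?coeff i"
    have "e 0 \<in> ?coeff 0" and "e (Suc j) \<in> ?coeff (Suc j)" for j
      using all by blast+
    then show "e 0 = a * d 0" "e (Suc j) \<in> thadd (a * d (Suc j)) (d j)" for j
      unfolding coeff0 coeffS by simp_all
  next
    fix i
    assume "e 0 = a * d 0" "\<forall>j. e (Suc j) \<in> thadd (a * d (Suc j)) (d j)"
    then show "e i \<in> ?coeff i"
      using coeff0 coeffS by (cases i) (simp_all del: upt_Suc)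
  qed
qed

lemma finite_support_recurrence_vanishes:
  fixes q :: "nat \<Rightarrow> real"
  assumes fin: "finite {i. q i \<noteq> 0}" and rec: "\<And>n. n \<ge> N \<Longrightarrow> q n = c * q (Suc n)"
    and "n \<ge> N"
  shows "q n = 0"
proof (rule ccontr)
  assume "q n \<noteq> 0"
  then have "q (n + k) \<noteq> 0" for k
  proof (induction k)
    case (Suc k)
    with rec[of "n + k"] \<open>n \<ge> N\<close> show ?case by auto
  qed simp
  then have "{n..} \<subseteq> {i. q i \<noteq> 0}"
    by (auto simp: le_iff_add)
  with fin show False
    using finite_subset infinite_Ici by blast
qed

lemma quotient_is_quadratic:
  fixes r :: real
  assumes "0 < r" and q: "q \<in> tpoly"
    and div: "tpoly_of_list [r, 1, r, 1] \<in> thprod (tpoly_of_list [r, 1]) q"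
  shows "\<exists>s. 0 \<le> s \<and> s \<le> r \<and> q = tpoly_of_list [1, s, 1]"
proof -
  let ?p = "tpoly_of_list [r, 1, r, 1]"
  have nonneg: "\<forall>i. 0 \<le> q i" and fin: "finite {i. q i \<noteq> 0}"
    using q by (auto simp: tpoly_def)
  have p0: "?p 0 = r * q 0" and pS: "\<And>j. ?p (Suc j) \<in> thadd (r * q (Suc j)) (q j)"
    using div thprod_linear_iff[of r q ?p] assms nonneg by auto
  have "q n = r * q (Suc n)" if "n \<ge> 3" for n
    using pS[of n] that nonneg assms zero_in_thadd_iff[of "r * q (Suc n)" "q n"]
    by (simp add: tpoly_of_list_def)
  then have high: "q n = 0" if "n \<ge> 3" for n
    using finite_support_recurrence_vanishes[OF fin] that by blast
  have q0: "q 0 = 1"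
    using p0 assms by (simp add: tpoly_of_list_def)
  have "1 \<in> thadd (r * q 3) (q 2)"
    using pS[of 2] by (simp add: numeral_eq_Suc tpoly_of_list_def)
  then have q2: "q 2 = 1"
    using high[of 3] by (simp add: thadd_iff max_def split: if_splits)
  have "r \<in> thadd (r * q 2) (q 1)"
    using pS[of 1] by (simp add: numeral_eq_Suc tpoly_of_list_def)
  then have q1: "q 1 \<le> r"
    using q2 by (simp add: thadd_iff max_def split: if_splits)
  have "q = tpoly_of_list [1, q 1, 1]"
  proof
    fix i :: nat
    consider "i = 0" | "i = 1" | "i = 2" | "i \<ge> 3" by linarith
    then show "q i = tpoly_of_list [1, q 1, 1] i"
      by cases (use q0 q2 high in \<open>auto simp: tpoly_of_list_def\<close>)
  qed
  with q1 nonneg show ?thesis by blast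
qed

lemma quadratic_is_quotient:
  fixes r s :: real
  assumes "0 < r" and "r < 1" and "0 \<le> s" and "s \<le> r"
  shows "tpoly_of_list [r, 1, r, 1] \<in> thprod (tpoly_of_list [r, 1]) (tpoly_of_list [1, s, 1])"
proof -
  let ?q = "tpoly_of_list [1, s, 1]"
  have "r * s \<le> r * 1"
    using assms by (intro mult_left_mono) auto
  with assms have rs: "r * s < 1" by linarith
  have "tpoly_of_list [r, 1, r, 1] (Suc j) \<in> thadd (r * ?q (Suc j)) (?q j)" for j
  proof -
    consider "j = 0" | "j = 1" | "j = 2" | "j \<ge> (3 :: nat)" by linarith
    then show ?thesis
      by cases (use rs assms in \<open>simp_all add: tpoly_of_list_def thadd_iff max_def\<close>)
  qed
  moreover have "\<forall>i. 0 \<le> ?q i"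
    using assms by (simp add: tpoly_of_list_def nth_Cons')
  ultimately show ?thesis
    using assms by (subst thprod_linear_iff) (auto simp: tpoly_of_list_def)
qed

text \<open>The candidate coming from ordinary division by \<open>T + r\<close> fails in degree 3, where
  \<open>1 \<in> 0 \<boxplus> r\<^sup>-\<^sup>2\<close> would force \<open>r = 1\<close>.\<close>

lemma classical_quotient_not_quotient:
  fixes r :: real
  assumes "0 < r" and "r < 1"
  shows "tpoly_of_list [r, 1, r, 1] \<notin>
           thprod (tpoly_of_list [r, 1]) (tpoly_of_list [1, 1 / r, 1 / r ^ 2])"
proof
  let ?q = "tpoly_of_list [1, 1 / r, 1 / r ^ 2]"
  assume "tpoly_of_list [r, 1, r, 1] \<in> thprod (tpoly_of_list [r, 1]) ?q"
  moreover have "\<forall>i. 0 \<le> ?q i"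
    using assms by (simp add: tpoly_of_list_def nth_Cons')
  ultimately have "tpoly_of_list [r, 1, r, 1] 3 \<in> thadd (r * ?q 3) (?q 2)"
    using assms by (simp add: thprod_linear_iff numeral_eq_Suc del: One_nat_def)
  moreover have "r ^ 2 < 1"
    using assms by (simp add: power_less_one_iff)
  ultimately show False
    by (simp add: tpoly_of_list_def thadd_iff max_def split: if_splits)
qed

theorem mainTheorem8:
  fixes r :: real
  assumes "0 < r" and "r < 1"
  shows "(\<forall>q \<in> tpoly.
            tpoly_of_list [r, 1, r, 1] \<in> thprod (tpoly_of_list [r, 1]) q
            \<longleftrightarrow> (\<exists>s. 0 \<le> s \<and> s \<le> r \<and> q = tpoly_of_list [1, s, 1]))
       \<and> tpoly_of_list [r, 1, r, 1] \<notin>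
            thprod (tpoly_of_list [r, 1]) (tpoly_of_list [1, 1 / r, 1 / r ^ 2])"
  using quotient_is_quadratic[OF \<open>0 < r\<close>] quadratic_is_quotient[OF assms]
    classical_quotient_not_quotient[OF assms]
  by blast

end
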